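(* Assume that the pair $(H,A)$ satisfies Condition G. Then for every $\theta\in B^{\mathbb C}_{R'}(0)$, $$\sigma(H_\theta)\subset\{x+\mathrm iy:\ x,y\in\mathbb R,\ |y|\le4C|\theta|(|x|+1)\}.$$
   Context: $\mathcal H$ is a complex separable Hilbert space, $H$ and $A$ are self-adjoint on $\mathcal H$, and $U(t)=e^{\mathrm itA}$. Condition G: - (G1) $U(t)D(H)\subset D(H)$ for all real $t$, and $\sup_{|t|\le1}\|HU(t)\psi\|<\infty$ for every $\psi\in D(H)$. - (G2) The form $(\psi,\varphi)\mapsto\langle H\psi,A\varphi\rangle-\langle A\psi,H\varphi\rangle$ on $D(H)\cap D(A)$ is continuous with respect to $\|\psi\|_H+\|\varphi\|_H$, where $\|\psi\|_H=\|H\psi\|+\|\psi\|$. - (G3) There is $R>0$ such that for every $\psi\in D(H)$ the map $t\mapsto H_t\psi:=U(t)HU(-t)\psi$ extends analytically to the strip $\{|\operatorname{Im}\theta|<R\}$. This defines operators $H_\theta$ with domain $D(H)$. - (G4) $M:=\sup_{|\theta|<R}\|H_\theta(H+\mathrm i)^{-1}\|<\infty$. Put $C:=\max\{1,M\}/R$ and $R':=1/(3C)$, and let $B^{\mathbb C}_{R'}(0)=\{|\theta|<R'\}$. *)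

theory Defs
  imports "HOL-Analysis.Analysis"
begin

class chilbert_space = banach +
  fixes scaleC :: "complex \<Rightarrow> 'a \<Rightarrow> 'a"
    and cinner :: "'a \<Rightarrow> 'a \<Rightarrow> complex"
  assumes scaleC_of_real: "scaleC (complex_of_real r) x = r *\<^sub>R x"
    and scaleC_add_left: "scaleC (a + b) x = scaleC a x + scaleC b x"
    and scaleC_add_right: "scaleC a (x + y) = scaleC a x + scaleC a y"
    and scaleC_scaleC: "scaleC a (scaleC b x) = scaleC (a * b) x"
    and norm_scaleC: "norm (scaleC a x) = cmod a * norm x"
    and cinner_commute: "cinner x y = cnj (cinner y x)"
    and cinner_add_right: "cinner x (y + z) = cinner x y + cinner x z"
    and cinner_scaleC_right: "cinner x (scaleC a y) = a * cinner x y"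
    and cinner_self_norm: "cinner x x = complex_of_real ((norm x)\<^sup>2)"

section \<open>Unbounded operators, given as (domain, map)\<close>

definition csubspace :: "'a::chilbert_space set \<Rightarrow> bool" where
  "csubspace D \<longleftrightarrow> 0 \<in> D \<and> (\<forall>x\<in>D. \<forall>y\<in>D. x + y \<in> D) \<and> (\<forall>c. \<forall>x\<in>D. scaleC c x \<in> D)"

definition clinear_op :: "'a::chilbert_space set \<Rightarrow> ('a \<Rightarrow> 'a) \<Rightarrow> bool" where
  "clinear_op D T \<longleftrightarrow> csubspace D \<and> (\<forall>x\<in>D. \<forall>y\<in>D. T (x + y) = T x + T y)
     \<and> (\<forall>c. \<forall>x\<in>D. T (scaleC c x) = scaleC c (T x))"

definition adj_dom :: "'a::chilbert_space set \<Rightarrow> ('a \<Rightarrow> 'a) \<Rightarrow> 'a set" where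
  "adj_dom D T = {\<phi>. \<exists>\<eta>. \<forall>\<psi>\<in>D. cinner \<phi> (T \<psi>) = cinner \<eta> \<psi>}"

definition self_adjoint_op :: "'a::chilbert_space set \<Rightarrow> ('a \<Rightarrow> 'a) \<Rightarrow> bool" where
  "self_adjoint_op D T \<longleftrightarrow> clinear_op D T \<and> closure D = UNIV \<and> adj_dom D T = D
     \<and> (\<forall>\<phi>\<in>D. \<forall>\<psi>\<in>D. cinner \<phi> (T \<psi>) = cinner (T \<phi>) \<psi>)"

text \<open>U(t) = e^{itA}: U is the strongly continuous one-parameter unitary group whose
  (Stone) generator is iA, i.e. D(A) is exactly the set of vectors where
  t \<mapsto> U(t)\<psi> is differentiable at 0, and the derivative there is i A\<psi>.\<close>
definition unitary_group_of :: "(real \<Rightarrow> 'a::chilbert_space \<Rightarrow> 'a) \<Rightarrow> 'a set \<Rightarrow> ('a \<Rightarrow> 'a) \<Rightarrow> bool" where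
  "unitary_group_of U D A \<longleftrightarrow>
     (\<forall>t. clinear_op UNIV (U t) \<and> (\<forall>x. norm (U t x) = norm x) \<and> surj (U t))
     \<and> U 0 = id \<and> (\<forall>s t. U (s + t) = U s \<circ> U t)
     \<and> (\<forall>x. continuous_on UNIV (\<lambda>t. U t x))
     \<and> D = {x. \<exists>v. ((\<lambda>t. U t x) has_vector_derivative v) (at 0)}
     \<and> (\<forall>x\<in>D. ((\<lambda>t. U t x) has_vector_derivative scaleC \<i> (A x)) (at 0))"

definition cresolvent :: "'a::chilbert_space set \<Rightarrow> ('a \<Rightarrow> 'a) \<Rightarrow> complex \<Rightarrow> 'a \<Rightarrow> 'a" where
  "cresolvent D T z \<phi> = (THE \<psi>. \<psi> \<in> D \<and> T \<psi> - scaleC z \<psi> = \<phi>)"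

definition cspectrum :: "'a::chilbert_space set \<Rightarrow> ('a \<Rightarrow> 'a) \<Rightarrow> complex set" where
  "cspectrum D T = {z. \<not> (bij_betw (\<lambda>x. T x - scaleC z x) D UNIV
       \<and> (\<exists>K. \<forall>x\<in>D. norm x \<le> K * norm (T x - scaleC z x)))}"

end

theory Submission
  imports Defs "HOL-Complex_Analysis.Complex_Analysis"
begin

text \<open>
  For real \<open>t\<close> the operators \<open>H\<^sub>t\<close> are unitarily equivalent to \<open>H\<close>; their analytic continuation
  \<open>\<theta> \<mapsto> H\<^sub>\<theta> \<psi> = H\<^sub>\<theta> (H + i)\<^sup>-\<^sup>1 (H + i) \<psi>\<close> is bounded by \<open>M \<parallel>(H + i) \<psi>\<parallel>\<close> on the disc of
  radius \<open>R\<close>, so Cauchy's estimate gives \<open>\<parallel>(H\<^sub>\<theta> - H) \<psi>\<parallel> \<le> (8/5) C \<bar>\<theta>\<bar> \<parallel>(H + i) \<psi>\<parallel>\<close>; linearity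
  of \<open>H\<^sub>\<theta>\<close> propagates from the real axis by the identity theorem. For \<open>z = x + i y\<close> the
  self-adjoint bounds \<open>\<parallel>(H - z) \<psi>\<parallel> \<ge> \<bar>y\<bar> \<parallel>\<psi>\<parallel>\<close> and \<open>\<parallel>(H - z) \<psi>\<parallel> \<ge> \<parallel>(H - x) \<psi>\<parallel>\<close> turn this into
  \<open>\<parallel>(H\<^sub>\<theta> - H) \<psi>\<parallel> \<le> (14/15) \<parallel>(H - z) \<psi>\<parallel>\<close> once \<open>\<bar>y\<bar> > 4 C \<bar>\<theta>\<bar> (\<bar>x\<bar> + 1)\<close>, and a perturbation of the
  invertible operator \<open>H - z\<close> with relative bound below \<open>1\<close> keeps it invertible.
\<close>

section \<open>Complex Hilbert spaces\<close>

lemma scaleC_zero_left [simp]: "scaleC 0 x = 0"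
  using scaleC_of_real[of 0 x] by simp

lemma scaleC_minus1: "scaleC (-1) x = - x"
  using scaleC_of_real[of "-1" x] by simp

lemma scaleC_zero_right [simp]: "scaleC a 0 = 0"
  using norm_scaleC[of a 0] by simp

lemma scaleC_minus_right: "scaleC a (- x) = - scaleC a x"
  by (metis mult.commute scaleC_minus1 scaleC_scaleC)

lemma scaleC_diff_right: "scaleC a (x - y) = scaleC a x - scaleC a y"
  using scaleC_add_right[of a x "- y"] by (simp add: scaleC_minus_right)

lemma scaleC_minus_left: "scaleC (- a) x = - scaleC a x"
  by (metis mult_minus1 scaleC_minus1 scaleC_scaleC)

lemma scaleC_scaleR: "scaleC a (r *\<^sub>R x) = r *\<^sub>R scaleC a x"
  by (metis mult.commute scaleC_of_real scaleC_scaleC)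

lemma cinner_add_left: "cinner (x + y) z = cinner x z + cinner y z"
  by (metis cinner_commute cinner_add_right complex_cnj_add)

lemma cinner_scaleC_left: "cinner (scaleC a x) y = cnj a * cinner x y"
  by (metis cinner_commute cinner_scaleC_right complex_cnj_mult complex_cnj_cnj)

lemma cinner_zero_right [simp]: "cinner x 0 = 0"
  using cinner_add_right[of x 0 0] by simp

lemma cinner_diff_right: "cinner x (y - z) = cinner x y - cinner x z"
  using cinner_add_right[of x "y - z" z] by simp

lemma cinner_diff_left: "cinner (x - y) z = cinner x z - cinner y z"
  using cinner_add_left[of "x - y" y z] by simp

lemma cinner_self_eq_0: "cinner x x = 0 \<longleftrightarrow> x = 0"
  by (simp add: cinner_self_norm)

lemma norm_sq_cinner: "(norm x)\<^sup>2 = Re (cinner x x)"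
  by (simp add: cinner_self_norm)

lemma norm_diff_sq: "(norm (x - y))\<^sup>2 = (norm x)\<^sup>2 + (norm y)\<^sup>2 - 2 * Re (cinner x y)"
proof -
  have "cinner (x - y) (x - y) = cinner x x - cinner x y - cinner y x + cinner y y"
    by (simp add: cinner_diff_left cinner_diff_right)
  moreover have "Re (cinner y x) = Re (cinner x y)"
    by (subst cinner_commute) simp
  ultimately show ?thesis
    by (simp add: norm_sq_cinner)
qed

lemma parallelogram_law:
  fixes x y :: "'a::chilbert_space"
  shows "(norm (x + y))\<^sup>2 + (norm (x - y))\<^sup>2 = 2 * (norm x)\<^sup>2 + 2 * (norm y)\<^sup>2"
  using norm_diff_sq[of x "- y"] norm_diff_sq[of x y] cinner_diff_right[of x 0 y]
  by simp

lemma cinner_cauchy_schwarz: "cmod (cinner x y) \<le> norm x * norm y"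
proof (cases "y = 0")
  case True then show ?thesis by simp
next
  case False
  then have ny: "norm y > 0" by simp
  define c where "c = cinner y x / complex_of_real ((norm y)\<^sup>2)"
  have "0 \<le> (norm (x - scaleC c y))\<^sup>2" by simp
  also have "\<dots> = (norm x)\<^sup>2 + (cmod c)\<^sup>2 * (norm y)\<^sup>2 - 2 * Re (c * cinner x y)"
    by (simp add: norm_diff_sq norm_scaleC cinner_scaleC_right power_mult_distrib)
  also have "c * cinner x y = complex_of_real ((cmod (cinner x y))\<^sup>2 / (norm y)\<^sup>2)"
  proof -
    have "cinner y x = cnj (cinner x y)" by (rule cinner_commute)
    then have "c * cinner x y = cnj (cinner x y) * cinner x y / complex_of_real ((norm y)\<^sup>2)"
      by (simp add: c_def)
    also have "cnj (cinner x y) * cinner x y = complex_of_real ((cmod (cinner x y))\<^sup>2)"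
      by (metis complex_norm_square mult.commute of_real_power)
    finally show ?thesis by simp
  qed
  also have "cmod c = cmod (cinner x y) / (norm y)\<^sup>2"
    by (simp add: c_def norm_divide cinner_commute[of y x] norm_power)
  finally have "0 \<le> (norm x)\<^sup>2 + (cmod (cinner x y) / (norm y)\<^sup>2)\<^sup>2 * (norm y)\<^sup>2
      - 2 * ((cmod (cinner x y))\<^sup>2 / (norm y)\<^sup>2)" by simp
  then have "0 \<le> (norm x)\<^sup>2 - (cmod (cinner x y))\<^sup>2 / (norm y)\<^sup>2"
    using ny by (simp add: power_divide field_simps power2_eq_square)
  then have "(cmod (cinner x y))\<^sup>2 \<le> (norm x * norm y)\<^sup>2"
    using ny by (simp add: field_simps power_mult_distrib)
  then show ?thesis
    using power2_le_imp_le by fastforce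
qed

lemma bounded_linear_cinner_right: "bounded_linear (cinner w)"
proof
  show "cinner w (r *\<^sub>R x) = r *\<^sub>R cinner w x" for r x
    by (metis cinner_scaleC_right scaleC_of_real scaleR_conv_of_real)
  show "\<exists>K. \<forall>x. norm (cinner w x) \<le> norm x * K"
    by (metis cinner_cauchy_schwarz mult.commute)
qed (rule cinner_add_right)

lemma bounded_linear_scaleC: "bounded_linear (scaleC a)"
proof
  show "\<exists>K. \<forall>x. norm (scaleC a x) \<le> norm x * K"
    by (rule exI[of _ "cmod a"]) (simp add: norm_scaleC mult.commute)
qed (simp_all add: scaleC_add_right scaleC_scaleR)

lemma tendsto_cinner_left:
  assumes "x \<longlonglongrightarrow> a"
  shows "(\<lambda>n. cinner (x n) y) \<longlonglongrightarrow> cinner a y"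
proof -
  have "(\<lambda>n. cnj (cinner y (x n))) \<longlonglongrightarrow> cnj (cinner y a)"
    by (intro tendsto_cnj bounded_linear.tendsto[OF bounded_linear_cinner_right] assms)
  moreover have "cinner u y = cnj (cinner y u)" for u
    by (rule cinner_commute)
  ultimately show ?thesis
    by simp
qed

lemma orthogonal_dense_eq_0:
  assumes "closure D = UNIV" "\<forall>\<kappa>\<in>D. cinner d \<kappa> = 0"
  shows "d = 0"
proof -
  have "closed {\<kappa>. cinner d \<kappa> = 0}"
    by (intro closed_Collect_eq continuous_on_const linear_continuous_on bounded_linear_cinner_right)
  then have "closure D \<subseteq> {\<kappa>. cinner d \<kappa> = 0}"
    using assms(2) by (intro closure_minimal) auto
  then show ?thesis
    using assms(1) cinner_self_eq_0 by auto
qed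

lemma csubspace_diff: "csubspace V \<Longrightarrow> x \<in> V \<Longrightarrow> y \<in> V \<Longrightarrow> x - y \<in> V"
  unfolding csubspace_def by (metis diff_conv_add_uminus scaleC_minus1)

lemma csubspace_scaleR: "csubspace V \<Longrightarrow> x \<in> V \<Longrightarrow> r *\<^sub>R x \<in> V"
  unfolding csubspace_def by (metis scaleC_of_real)

lemma near_minimizers_close:
  fixes f u v :: "'a::chilbert_space"
  assumes V: "csubspace V" "u \<in> V" "v \<in> V"
    and lower: "\<forall>w\<in>V. d \<le> (norm (f - w))\<^sup>2"
    and u: "(norm (f - u))\<^sup>2 \<le> d + a" and v: "(norm (f - v))\<^sup>2 \<le> d + b"
  shows "(norm (u - v))\<^sup>2 \<le> 2 * a + 2 * b"
proof -
  define m where "m = (1/2::real) *\<^sub>R (u + v)"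
  have "m \<in> V"
    unfolding m_def using V by (simp add: csubspace_def csubspace_scaleR)
  then have "d \<le> (norm (f - m))\<^sup>2"
    using lower by blast
  moreover have "(f - u) + (f - v) = 2 *\<^sub>R (f - m)"
    unfolding m_def by (simp add: algebra_simps scaleR_2)
  then have "(norm ((f - u) + (f - v)))\<^sup>2 = 4 * (norm (f - m))\<^sup>2"
    by (simp add: power_mult_distrib)
  moreover have "(f - u) - (f - v) = v - u"
    by simp
  ultimately show ?thesis
    using parallelogram_law[of "f - u" "f - v"] u v by (simp add: norm_minus_commute)
qed

lemma minimizing_sequence_Cauchy:
  fixes f :: "'a::chilbert_space"
  assumes "csubspace V" and vV: "\<And>n. v n \<in> V" and lower: "\<forall>w\<in>V. d \<le> (norm (f - w))\<^sup>2"
    and vd: "\<And>n. (norm (f - v n))\<^sup>2 < d + 1 / (real n + 1)"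
  shows "Cauchy v"
proof (rule metric_CauchyI)
  fix e :: real
  assume "e > 0"
  obtain N :: nat where "4 / e\<^sup>2 < real N"
    using reals_Archimedean2 by blast
  then have "4 / e\<^sup>2 < real N + 1"
    by linarith
  with \<open>e > 0\<close> have N: "4 / (real N + 1) < e\<^sup>2"
    by (simp add: field_simps)
  show "\<exists>M. \<forall>m\<ge>M. \<forall>n\<ge>M. dist (v m) (v n) < e"
  proof (intro exI allI impI)
    fix m n
    assume "N \<le> m" "N \<le> n"
    then have "2 / (real m + 1) \<le> 2 / (real N + 1)" "2 / (real n + 1) \<le> 2 / (real N + 1)"
      by (simp_all add: frac_le)
    with N have "(norm (v m - v n))\<^sup>2 < e\<^sup>2"
      using near_minimizers_close[OF assms(1) vV vV lower less_imp_le[OF vd[of m]] less_imp_le[OF vd[of n]]]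
      by linarith
    then show "dist (v m) (v n) < e"
      using \<open>e > 0\<close> by (simp add: dist_norm power_less_imp_less_base)
  qed
qed

lemma nearest_point_exists:
  fixes f :: "'a::chilbert_space"
  assumes "closed V" "csubspace V"
  shows "\<exists>p\<in>V. \<forall>v\<in>V. norm (f - p) \<le> norm (f - v)"
proof -
  define d where "d = Inf ((\<lambda>v. (norm (f - v))\<^sup>2) ` V)"
  have bdd: "bdd_below ((\<lambda>v. (norm (f - v))\<^sup>2) ` V)"
    by (rule bdd_belowI[of _ 0]) auto
  have lower: "\<forall>v\<in>V. d \<le> (norm (f - v))\<^sup>2"
    unfolding d_def using bdd by (simp add: cInf_lower)
  have "\<exists>v\<in>V. (norm (f - v))\<^sup>2 < d + 1 / (real n + 1)" for n
  proof -
    have "Inf ((\<lambda>v. (norm (f - v))\<^sup>2) ` V) < d + 1 / (real n + 1)"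
      unfolding d_def by simp
    then show ?thesis
      using assms(2) by (subst (asm) cInf_less_iff) (auto simp: bdd csubspace_def)
  qed
  then obtain v where vV: "\<And>n. v n \<in> V" and vd: "\<And>n. (norm (f - v n))\<^sup>2 < d + 1 / (real n + 1)"
    by metis
  have "Cauchy v"
    by (rule minimizing_sequence_Cauchy[OF assms(2) vV lower vd])
  then obtain p where vp: "v \<longlonglongrightarrow> p"
    using Cauchy_convergent_iff convergent_def by blast
  have "p \<in> V"
    using assms(1) vV vp closed_sequentially by blast
  have "(\<lambda>n. d + 1 / (real n + 1)) \<longlonglongrightarrow> d + 0"
    using LIMSEQ_Suc[OF lim_1_over_n] by (intro tendsto_intros) (simp add: add.commute)
  moreover have "(\<lambda>n. (norm (f - v n))\<^sup>2) \<longlonglongrightarrow> (norm (f - p))\<^sup>2"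
    by (intro tendsto_intros vp)
  ultimately have "(norm (f - p))\<^sup>2 \<le> d"
    using vd by (intro LIMSEQ_le[where X="\<lambda>n. (norm (f - v n))\<^sup>2"]) (auto intro: less_imp_le)
  with lower \<open>p \<in> V\<close> show ?thesis
    by (meson order_trans power2_le_imp_le norm_ge_zero)
qed

lemma nearest_point_orthogonal:
  fixes f p w :: "'a::chilbert_space"
  assumes V: "csubspace V" "p \<in> V" "w \<in> V"
    and nearest: "\<forall>v\<in>V. norm (f - p) \<le> norm (f - v)"
  shows "cinner w (f - p) = 0"
proof -
  define g where "g = f - p"
  define c where "c = cinner w g"
  define t where "t = 1 / ((norm w)\<^sup>2 + 1)"
  have t: "t > 0" "t * (norm w)\<^sup>2 < 1"
  proof -
    have "(norm w)\<^sup>2 + 1 > 0"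
      by (simp add: add_nonneg_pos)
    then show "t > 0" "t * (norm w)\<^sup>2 < 1"
      unfolding t_def by (simp_all add: divide_less_eq)
  qed
  define s where "s = complex_of_real t * c"
  have "p + scaleC s w \<in> V"
    using V unfolding csubspace_def by blast
  then have "(norm g)\<^sup>2 \<le> (norm (g - scaleC s w))\<^sup>2"
    using nearest unfolding g_def by (simp add: diff_diff_eq power_mono)
  also have "\<dots> = (norm g)\<^sup>2 + t\<^sup>2 * (cmod c)\<^sup>2 * (norm w)\<^sup>2 - 2 * (t * (cmod c)\<^sup>2)"
  proof -
    have "c * cinner g w = complex_of_real ((cmod c)\<^sup>2)"
      unfolding c_def cinner_commute[of g w] by (rule complex_norm_square[symmetric])
    then show ?thesis
      using t by (simp add: norm_diff_sq norm_scaleC s_def norm_mult power_mult_distrib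
          cinner_scaleC_right mult.assoc)
  qed
  finally have "0 \<le> (t * (cmod c)\<^sup>2) * (t * (norm w)\<^sup>2 - 2)"
    by (simp add: algebra_simps power2_eq_square)
  with t(2) have "t * (cmod c)\<^sup>2 \<le> 0"
    by (auto simp: zero_le_mult_iff)
  with t(1) have "(cmod c)\<^sup>2 \<le> 0"
    by (simp add: mult_le_0_iff)
  then show ?thesis
    unfolding c_def g_def by simp
qed

lemma Cauchy_dominated:
  fixes x :: "nat \<Rightarrow> 'a::metric_space" and u :: "nat \<Rightarrow> 'b::metric_space"
  assumes "Cauchy u" and dom: "\<And>m n. dist (x m) (x n) \<le> c * dist (u m) (u n)"
  shows "Cauchy x"
proof (rule metric_CauchyI)
  fix e :: real
  assume "e > 0"
  then obtain M where M: "\<forall>m\<ge>M. \<forall>n\<ge>M. dist (u m) (u n) < e / (\<bar>c\<bar> + 1)"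
    using \<open>Cauchy u\<close> unfolding Cauchy_def by (metis abs_ge_zero add_nonneg_pos divide_pos_pos zero_less_one)
  show "\<exists>M. \<forall>m\<ge>M. \<forall>n\<ge>M. dist (x m) (x n) < e"
  proof (intro exI allI impI)
    fix m n
    assume "M \<le> m" "M \<le> n"
    then have "(\<bar>c\<bar> + 1) * dist (u m) (u n) < e"
      using M by (simp add: pos_less_divide_eq mult.commute add_nonneg_pos)
    moreover have "c * dist (u m) (u n) \<le> (\<bar>c\<bar> + 1) * dist (u m) (u n)"
      by (intro mult_right_mono) auto
    ultimately show "dist (x m) (x n) < e"
      using dom[of m n] by linarith
  qed
qed

section \<open>Self-adjoint operators\<close>

locale self_adjoint_operator =
  fixes D :: "'a::chilbert_space set" and H :: "'a \<Rightarrow> 'a"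
  assumes self_adjoint: "self_adjoint_op D H"
begin

lemma csubspace_domain: "csubspace D"
  and H_add: "x \<in> D \<Longrightarrow> y \<in> D \<Longrightarrow> H (x + y) = H x + H y"
  and H_scaleC: "x \<in> D \<Longrightarrow> H (scaleC c x) = scaleC c (H x)"
  and dense_domain: "closure D = UNIV"
  and adj_dom_eq: "adj_dom D H = D"
  and symmetric: "\<phi> \<in> D \<Longrightarrow> \<psi> \<in> D \<Longrightarrow> cinner \<phi> (H \<psi>) = cinner (H \<phi>) \<psi>"
  using self_adjoint unfolding self_adjoint_op_def clinear_op_def by auto

lemma domain_diff: "x \<in> D \<Longrightarrow> y \<in> D \<Longrightarrow> x - y \<in> D"
  by (rule csubspace_diff[OF csubspace_domain])

lemma H_diff: "x \<in> D \<Longrightarrow> y \<in> D \<Longrightarrow> H (x - y) = H x - H y"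
  by (metis H_add diff_add_cancel domain_diff add_diff_cancel_right')

lemma shift_diff: "x \<in> D \<Longrightarrow> y \<in> D \<Longrightarrow>
    (H x - scaleC z x) - (H y - scaleC z y) = H (x - y) - scaleC z (x - y)"
  by (simp add: H_diff scaleC_diff_right algebra_simps)

lemma Im_cinner_H_self:
  assumes "\<psi> \<in> D"
  shows "Im (cinner (H \<psi>) \<psi>) = 0"
proof -
  have "cinner (H \<psi>) \<psi> = cnj (cinner (H \<psi>) \<psi>)"
    using symmetric[OF assms assms] cinner_commute[of "H \<psi>" \<psi>] by simp
  then have "Im (cinner (H \<psi>) \<psi>) = Im (cnj (cinner (H \<psi>) \<psi>))"
    by (rule arg_cong)
  then have "Im (cinner (H \<psi>) \<psi>) = - Im (cinner (H \<psi>) \<psi>)"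
    by simp
  then show ?thesis
    by linarith
qed

text \<open>The cross term vanishes because \<open>\<langle>(H - Re z)\<psi>, \<psi>\<rangle>\<close> is real.\<close>

lemma norm_shift_sq:
  assumes "\<psi> \<in> D"
  shows "(norm (H \<psi> - scaleC z \<psi>))\<^sup>2
    = (norm (H \<psi> - scaleC (complex_of_real (Re z)) \<psi>))\<^sup>2 + (Im z)\<^sup>2 * (norm \<psi>)\<^sup>2"
proof -
  define a where "a = H \<psi> - scaleC (complex_of_real (Re z)) \<psi>"
  define b where "b = \<i> * complex_of_real (Im z)"
  have z: "z = complex_of_real (Re z) + b"
    unfolding b_def by (simp add: complex_eq_iff)
  have split: "H \<psi> - scaleC z \<psi> = a - scaleC b \<psi>"
    unfolding a_def by (subst z) (simp add: scaleC_add_left)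
  have "Im (cinner a \<psi>) = 0"
    unfolding a_def using Im_cinner_H_self[OF assms]
    by (simp add: cinner_diff_left cinner_scaleC_left cinner_self_norm)
  then have "Re (cinner a (scaleC b \<psi>)) = 0"
    unfolding b_def by (simp add: cinner_scaleC_right)
  then show ?thesis
    unfolding split a_def[symmetric]
    by (simp add: norm_diff_sq norm_scaleC b_def norm_mult power_mult_distrib)
qed

lemma abs_Im_mult_norm_le:
  assumes "\<psi> \<in> D"
  shows "\<bar>Im z\<bar> * norm \<psi> \<le> norm (H \<psi> - scaleC z \<psi>)"
proof -
  have "(\<bar>Im z\<bar> * norm \<psi>)\<^sup>2 \<le> (norm (H \<psi> - scaleC z \<psi>))\<^sup>2"
    using norm_shift_sq[OF assms, of z] by (simp add: power_mult_distrib)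
  then show ?thesis
    by (rule power2_le_imp_le) simp
qed

lemma norm_shift_Re_le:
  assumes "\<psi> \<in> D"
  shows "norm (H \<psi> - scaleC (complex_of_real (Re z)) \<psi>) \<le> norm (H \<psi> - scaleC z \<psi>)"
proof -
  have "(norm (H \<psi> - scaleC (complex_of_real (Re z)) \<psi>))\<^sup>2 \<le> (norm (H \<psi> - scaleC z \<psi>))\<^sup>2"
    using norm_shift_sq[OF assms, of z] by simp
  then show ?thesis
    by (rule power2_le_imp_le) simp
qed

lemma inj_on_shift:
  assumes "Im z \<noteq> 0"
  shows "inj_on (\<lambda>x. H x - scaleC z x) D"
proof (rule inj_onI)
  fix x y
  assume xy: "x \<in> D" "y \<in> D" "H x - scaleC z x = H y - scaleC z y"
  then have "\<bar>Im z\<bar> * norm (x - y) \<le> 0"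
    using abs_Im_mult_norm_le[OF domain_diff[OF xy(1,2)], of z] shift_diff[OF xy(1,2), of z] by simp
  with assms show "x = y"
    by (simp add: mult_le_0_iff)
qed

lemma graph_closed:
  assumes "\<And>n. \<psi> n \<in> D" "\<psi> \<longlonglongrightarrow> \<psi>0" "(\<lambda>n. H (\<psi> n)) \<longlonglongrightarrow> \<eta>"
  shows "\<psi>0 \<in> D" "H \<psi>0 = \<eta>"
proof -
  have adjoint: "cinner \<psi>0 (H \<kappa>) = cinner \<eta> \<kappa>" if "\<kappa> \<in> D" for \<kappa>
  proof -
    have "(\<lambda>n. cinner (\<psi> n) (H \<kappa>)) \<longlonglongrightarrow> cinner \<psi>0 (H \<kappa>)"
      by (rule tendsto_cinner_left[OF assms(2)])
    moreover have "(\<lambda>n. cinner (\<psi> n) (H \<kappa>)) \<longlonglongrightarrow> cinner \<eta> \<kappa>"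
      using tendsto_cinner_left[OF assms(3)] symmetric[OF assms(1) that] by simp
    ultimately show ?thesis
      by (rule LIMSEQ_unique)
  qed
  then have "\<psi>0 \<in> adj_dom D H"
    unfolding adj_dom_def by blast
  then show "\<psi>0 \<in> D"
    using adj_dom_eq by simp
  then have "\<forall>\<kappa>\<in>D. cinner (H \<psi>0 - \<eta>) \<kappa> = 0"
    using adjoint symmetric by (simp add: cinner_diff_left)
  then have "H \<psi>0 - \<eta> = 0"
    using orthogonal_dense_eq_0[OF dense_domain] by blast
  then show "H \<psi>0 = \<eta>"
    by simp
qed

lemma closed_shift_range:
  assumes "Im z \<noteq> 0"
  shows "closed ((\<lambda>x. H x - scaleC z x) ` D)"
proof (unfold closed_sequential_limits, intro allI impI, elim conjE)
  fix u l
  assume "\<forall>n. u n \<in> (\<lambda>x. H x - scaleC z x) ` D" and ul: "u \<longlonglongrightarrow> l"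
  then have "\<forall>n. \<exists>x. x \<in> D \<and> u n = H x - scaleC z x"
    by blast
  then obtain \<psi> where "\<forall>n. \<psi> n \<in> D \<and> u n = H (\<psi> n) - scaleC z (\<psi> n)"
    by (rule choice[THEN exE])
  then have \<psi>D: "\<And>n. \<psi> n \<in> D" and u: "\<And>n. u n = H (\<psi> n) - scaleC z (\<psi> n)"
    by auto
  have "dist (\<psi> m) (\<psi> n) \<le> (1 / \<bar>Im z\<bar>) * dist (u m) (u n)" for m n
  proof -
    have "\<bar>Im z\<bar> * norm (\<psi> m - \<psi> n) \<le> norm (u m - u n)"
      using abs_Im_mult_norm_le[OF domain_diff[OF \<psi>D[of m] \<psi>D[of n]], of z]
        shift_diff[OF \<psi>D[of m] \<psi>D[of n], of z] u by simp
    with assms show ?thesis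
      by (simp add: dist_norm field_simps)
  qed
  then have "Cauchy \<psi>"
    using Cauchy_dominated LIMSEQ_imp_Cauchy[OF ul] by blast
  then obtain \<psi>0 where \<psi>0: "\<psi> \<longlonglongrightarrow> \<psi>0"
    using Cauchy_convergent_iff convergent_def by blast
  have "H (\<psi> n) = u n + scaleC z (\<psi> n)" for n
    using u[of n] by simp
  then have "(\<lambda>n. H (\<psi> n)) \<longlonglongrightarrow> l + scaleC z \<psi>0"
    by (simp only:) (intro tendsto_add ul bounded_linear.tendsto[OF bounded_linear_scaleC] \<psi>0)
  then have "\<psi>0 \<in> D" "H \<psi>0 = l + scaleC z \<psi>0"
    using graph_closed[OF \<psi>D \<psi>0] by auto
  then show "l \<in> (\<lambda>x. H x - scaleC z x) ` D"
    by force
qed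

lemma csubspace_shift_range: "csubspace ((\<lambda>x. H x - scaleC z x) ` D)"
  unfolding csubspace_def
proof (intro conjI ballI allI)
  show "0 \<in> (\<lambda>x. H x - scaleC z x) ` D"
    using csubspace_domain H_scaleC[of 0 0] unfolding csubspace_def by force
next
  fix x y
  assume "x \<in> (\<lambda>x. H x - scaleC z x) ` D" "y \<in> (\<lambda>x. H x - scaleC z x) ` D"
  then obtain a b where "a \<in> D" "b \<in> D" "x = H a - scaleC z a" "y = H b - scaleC z b"
    by blast
  moreover have "a + b \<in> D"
    using csubspace_domain \<open>a \<in> D\<close> \<open>b \<in> D\<close> unfolding csubspace_def by blast
  ultimately show "x + y \<in> (\<lambda>x. H x - scaleC z x) ` D"
    by (intro image_eqI[of _ _ "a + b"]) (simp_all add: H_add scaleC_add_right)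
next
  fix c x
  assume "x \<in> (\<lambda>x. H x - scaleC z x) ` D"
  then obtain a where "a \<in> D" "x = H a - scaleC z a"
    by blast
  moreover have "scaleC c a \<in> D"
    using csubspace_domain \<open>a \<in> D\<close> unfolding csubspace_def by blast
  ultimately show "scaleC c x \<in> (\<lambda>x. H x - scaleC z x) ` D"
    by (intro image_eqI[of _ _ "scaleC c a"]) (simp_all add: H_scaleC scaleC_diff_right scaleC_scaleC mult.commute)
qed

text \<open>A vector orthogonal to the range of \<open>H - z\<close> lies in \<open>D(H\<^sup>*) = D\<close> and is an eigenvector
  of \<open>H\<close> with the non-real eigenvalue \<open>cnj z\<close>, so it vanishes.\<close>

lemma shift_range_UNIV:
  assumes "Im z \<noteq> 0"
  shows "(\<lambda>x. H x - scaleC z x) ` D = UNIV"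
proof (intro set_eqI iffI)
  fix f :: 'a
  let ?V = "(\<lambda>x. H x - scaleC z x) ` D"
  obtain p where "p \<in> ?V" and nearest: "\<forall>v\<in>?V. norm (f - p) \<le> norm (f - v)"
    using nearest_point_exists[OF closed_shift_range[OF assms] csubspace_shift_range] by blast
  define g where "g = f - p"
  have g: "cinner g (H \<psi>) = cinner (scaleC (cnj z) g) \<psi>" if "\<psi> \<in> D" for \<psi>
  proof -
    have "cinner (H \<psi> - scaleC z \<psi>) g = 0"
      using nearest_point_orthogonal[OF csubspace_shift_range \<open>p \<in> ?V\<close> _ nearest] that
      unfolding g_def by blast
    then have "cinner g (H \<psi> - scaleC z \<psi>) = 0"
      by (metis cinner_commute complex_cnj_zero)
    then show ?thesis
      by (simp add: cinner_diff_right cinner_scaleC_right cinner_scaleC_left)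
  qed
  then have "g \<in> D"
    using adj_dom_eq unfolding adj_dom_def by blast
  have "cinner g (H g) = z * cinner g g"
    using g[OF \<open>g \<in> D\<close>] by (simp add: cinner_scaleC_left)
  moreover have "cinner g (H g) = cnj (cinner g (H g))"
    using symmetric[OF \<open>g \<in> D\<close> \<open>g \<in> D\<close>] cinner_commute[of "H g" g] by simp
  ultimately have "z * cinner g g = cnj z * cinner g g"
    by (metis cinner_self_norm complex_cnj_complex_of_real complex_cnj_mult)
  then have "(z - cnj z) * cinner g g = 0"
    by (simp add: algebra_simps)
  moreover have "z - cnj z \<noteq> 0"
    using assms by (simp add: complex_eq_iff)
  ultimately have "g = 0"
    by (simp add: cinner_self_eq_0)
  then show "f \<in> ?V"
    using \<open>p \<in> ?V\<close> unfolding g_def by simp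
qed simp

lemma cresolvent_shift:
  assumes "Im z \<noteq> 0" "\<psi> \<in> D"
  shows "cresolvent D H z (H \<psi> - scaleC z \<psi>) = \<psi>"
  unfolding cresolvent_def using assms inj_on_shift[OF assms(1)]
  by (intro the_equality) (auto dest: inj_onD)

end

section \<open>Relatively bounded perturbations\<close>

lemma inj_on_add_small_perturbation:
  fixes S B :: "'a::ab_group_add \<Rightarrow> 'b::real_normed_vector"
  assumes D_diff: "\<And>a b. a \<in> D \<Longrightarrow> b \<in> D \<Longrightarrow> a - b \<in> D"
    and S_inj: "inj_on S D"
    and S_diff: "\<And>a b. a \<in> D \<Longrightarrow> b \<in> D \<Longrightarrow> S (a - b) = S a - S b"
    and B_diff: "\<And>a b. a \<in> D \<Longrightarrow> b \<in> D \<Longrightarrow> B (a - b) = B a - B b"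
    and small: "\<And>\<psi>. \<psi> \<in> D \<Longrightarrow> norm (B \<psi>) \<le> q * norm (S \<psi>)"
    and "q < 1"
  shows "inj_on (\<lambda>\<psi>. S \<psi> + B \<psi>) D"
proof (rule inj_onI)
  fix a b
  assume ab: "a \<in> D" "b \<in> D" "S a + B a = S b + B b"
  have "S (a - b) + B (a - b) = (S a + B a) - (S b + B b)"
    by (simp add: S_diff[OF ab(1,2)] B_diff[OF ab(1,2)])
  with ab(3) have "S (a - b) = - B (a - b)"
    by (simp add: eq_neg_iff_add_eq_0)
  then have "norm (S (a - b)) \<le> q * norm (S (a - b))"
    using small[OF D_diff[OF ab(1,2)]] by simp
  then have "(1 - q) * norm (S (a - b)) \<le> 0"
    by (simp add: algebra_simps)
  with \<open>q < 1\<close> have "S (a - b) = 0"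
    by (simp add: mult_le_0_iff)
  then show "a = b"
    using S_inj ab(1,2) S_diff[OF ab(1,2)] by (simp add: inj_on_def)
qed

text \<open>Banach's fixed point theorem for the contraction \<open>v \<mapsto> f - B (S\<^sup>-\<^sup>1 v)\<close>.\<close>

lemma range_add_small_perturbation:
  fixes S B :: "'a::ab_group_add \<Rightarrow> 'b::banach"
  assumes D_diff: "\<And>a b. a \<in> D \<Longrightarrow> b \<in> D \<Longrightarrow> a - b \<in> D"
    and S_surj: "S ` D = UNIV"
    and S_diff: "\<And>a b. a \<in> D \<Longrightarrow> b \<in> D \<Longrightarrow> S (a - b) = S a - S b"
    and B_diff: "\<And>a b. a \<in> D \<Longrightarrow> b \<in> D \<Longrightarrow> B (a - b) = B a - B b"
    and small: "\<And>\<psi>. \<psi> \<in> D \<Longrightarrow> norm (B \<psi>) \<le> q * norm (S \<psi>)"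
    and q: "0 \<le> q" "q < 1"
  shows "(\<lambda>\<psi>. S \<psi> + B \<psi>) ` D = UNIV"
proof (intro set_eqI iffI)
  fix f :: 'b
  define Si where "Si = inv_into D S"
  have Si: "Si v \<in> D" "S (Si v) = v" for v
    using S_surj by (simp_all add: Si_def inv_into_into f_inv_into_f)
  have "\<forall>v w. dist (f - B (Si v)) (f - B (Si w)) \<le> q * dist v w"
  proof (intro allI)
    fix v w
    have "dist (f - B (Si v)) (f - B (Si w)) = norm (B (Si w - Si v))"
      by (simp add: B_diff[OF Si(1) Si(1)] dist_norm)
    also have "\<dots> \<le> q * norm (S (Si w - Si v))"
      by (rule small[OF D_diff[OF Si(1) Si(1)]])
    also have "\<dots> = q * dist v w"
      by (simp add: S_diff[OF Si(1) Si(1)] Si(2) dist_norm norm_minus_commute)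
    finally show "dist (f - B (Si v)) (f - B (Si w)) \<le> q * dist v w" .
  qed
  from ex1_implies_ex[OF banach_fix_type[OF q this]] obtain v where "f - B (Si v) = v"
    by blast
  then have "S (Si v) + B (Si v) = f"
    by (metis Si(2) diff_add_cancel)
  then show "f \<in> (\<lambda>\<psi>. S \<psi> + B \<psi>) ` D"
    using Si(1) by blast
qed simp

context self_adjoint_operator
begin

lemma norm_plus_i_le_shift:
  assumes "\<psi> \<in> D" "Im z \<noteq> 0"
  shows "norm (H \<psi> + scaleC \<i> \<psi>) \<le> (1 + (\<bar>Re z\<bar> + 1) / \<bar>Im z\<bar>) * norm (H \<psi> - scaleC z \<psi>)"
proof -
  let ?x = "complex_of_real (Re z)"
  have "H \<psi> + scaleC \<i> \<psi> = (H \<psi> - scaleC ?x \<psi>) + scaleC (?x + \<i>) \<psi>"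
    by (simp add: scaleC_add_left)
  then have "norm (H \<psi> + scaleC \<i> \<psi>) \<le> norm (H \<psi> - scaleC ?x \<psi>) + norm (scaleC (?x + \<i>) \<psi>)"
    by (metis norm_triangle_ineq)
  moreover have "norm (scaleC (?x + \<i>) \<psi>) \<le> (\<bar>Re z\<bar> + 1) * norm \<psi>"
    using norm_triangle_ineq[of ?x \<i>] by (simp add: norm_scaleC mult_right_mono)
  moreover have "(\<bar>Re z\<bar> + 1) * norm \<psi> \<le> (\<bar>Re z\<bar> + 1) / \<bar>Im z\<bar> * norm (H \<psi> - scaleC z \<psi>)"
  proof -
    have "norm \<psi> \<le> norm (H \<psi> - scaleC z \<psi>) / \<bar>Im z\<bar>"
      using abs_Im_mult_norm_le[OF assms(1), of z] assms(2) by (simp add: le_divide_eq mult.commute)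
    from mult_left_mono[OF this, of "\<bar>Re z\<bar> + 1"] show ?thesis
      by simp
  qed
  moreover have "norm (H \<psi> - scaleC ?x \<psi>) \<le> norm (H \<psi> - scaleC z \<psi>)"
    by (rule norm_shift_Re_le[OF assms(1)])
  ultimately show ?thesis
    by (simp add: distrib_right)
qed

lemma notin_cspectrum_relative_perturbation:
  assumes B_diff: "\<And>a b. a \<in> D \<Longrightarrow> b \<in> D \<Longrightarrow> B (a - b) = B a - B b"
    and B_bound: "\<And>\<psi>. \<psi> \<in> D \<Longrightarrow> norm (B \<psi>) \<le> \<epsilon> * norm (H \<psi> + scaleC \<i> \<psi>)"
    and "0 \<le> \<epsilon>" "Im z \<noteq> 0" and small: "\<epsilon> * (1 + (\<bar>Re z\<bar> + 1) / \<bar>Im z\<bar>) < 1"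
  shows "z \<notin> cspectrum D (\<lambda>\<psi>. H \<psi> + B \<psi>)"
proof -
  define q where "q = \<epsilon> * (1 + (\<bar>Re z\<bar> + 1) / \<bar>Im z\<bar>)"
  have q: "0 \<le> q" "q < 1"
    unfolding q_def using assms(3) small by (simp_all add: zero_le_mult_iff)
  have B_small: "norm (B \<psi>) \<le> q * norm (H \<psi> - scaleC z \<psi>)" if "\<psi> \<in> D" for \<psi>
    unfolding q_def mult.assoc
    by (rule order_trans[OF B_bound[OF that] mult_left_mono[OF norm_plus_i_le_shift[OF that assms(4)] assms(3)]])
  have T: "(\<lambda>\<psi>. (H \<psi> - scaleC z \<psi>) + B \<psi>) = (\<lambda>\<psi>. (H \<psi> + B \<psi>) - scaleC z \<psi>)"
    by (simp add: fun_eq_iff algebra_simps)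
  have S_diff: "H (a - b) - scaleC z (a - b) = (H a - scaleC z a) - (H b - scaleC z b)"
    if "a \<in> D" "b \<in> D" for a b
    by (rule shift_diff[OF that, symmetric])
  have "bij_betw (\<lambda>\<psi>. (H \<psi> + B \<psi>) - scaleC z \<psi>) D UNIV"
    unfolding T[symmetric] bij_betw_def
    using inj_on_add_small_perturbation[OF domain_diff inj_on_shift[OF assms(4)] S_diff B_diff B_small q(2)]
      range_add_small_perturbation[OF domain_diff shift_range_UNIV[OF assms(4)] S_diff B_diff B_small q]
    by blast
  moreover have "norm \<psi> \<le> 1 / ((1 - q) * \<bar>Im z\<bar>) * norm ((H \<psi> + B \<psi>) - scaleC z \<psi>)"
    if "\<psi> \<in> D" for \<psi>
  proof -
    have "(1 - q) * norm (H \<psi> - scaleC z \<psi>) \<le> norm ((H \<psi> - scaleC z \<psi>) + B \<psi>)"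
      unfolding left_diff_distrib
      using norm_diff_ineq[of "H \<psi> - scaleC z \<psi>" "B \<psi>"] B_small[OF that] by simp
    moreover have "(1 - q) * (\<bar>Im z\<bar> * norm \<psi>) \<le> (1 - q) * norm (H \<psi> - scaleC z \<psi>)"
      using abs_Im_mult_norm_le[OF that, of z] q by simp
    moreover have "(1 - q) * \<bar>Im z\<bar> > 0"
      using q assms(4) by simp
    ultimately show ?thesis
      by (simp add: T[THEN fun_cong] le_divide_eq mult.commute mult.left_commute)
  qed
  ultimately show ?thesis
    unfolding cspectrum_def by blast
qed

end

section \<open>Weakly holomorphic vector-valued functions\<close>

lemma cinner_holomorphic_on:
  fixes F :: "complex \<Rightarrow> 'a::chilbert_space"
  assumes "open S"
    and F: "\<And>\<theta>. \<theta> \<in> S \<Longrightarrow> \<exists>v. (F has_derivative (\<lambda>h. scaleC h v)) (at \<theta>)"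
  shows "(\<lambda>z. cinner w (F z)) holomorphic_on S"
  unfolding holomorphic_on_open[OF \<open>open S\<close>]
proof
  fix \<theta>
  assume "\<theta> \<in> S"
  then obtain v where v: "(F has_derivative (\<lambda>h. scaleC h v)) (at \<theta>)"
    using F by blast
  have "((\<lambda>z. cinner w (F z)) has_derivative (\<lambda>h. cinner w (scaleC h v))) (at \<theta>)"
    by (rule bounded_linear.has_derivative[OF bounded_linear_cinner_right v])
  moreover have "(\<lambda>h. cinner w (scaleC h v)) = (\<lambda>h. cinner w v * h)"
    by (simp add: fun_eq_iff cinner_scaleC_right mult.commute)
  ultimately show "\<exists>f'. ((\<lambda>z. cinner w (F z)) has_field_derivative f') (at \<theta>)"
    by (auto simp: has_field_derivative_def)
qed

lemma holomorphic_lipschitz_estimate: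
  assumes hol: "g holomorphic_on ball 0 R"
    and bound: "\<And>z. z \<in> ball 0 R \<Longrightarrow> norm (g z) \<le> B"
    and r: "r > 0" "cmod \<theta> + r < R"
  shows "norm (g \<theta> - g 0) \<le> B / r * cmod \<theta>"
proof -
  have cball_sub: "cball u r \<subseteq> ball 0 R" if "u \<in> closed_segment 0 \<theta>" for u
  proof
    fix x
    assume "x \<in> cball u r"
    then have "cmod (x - u) \<le> r"
      by (simp add: dist_norm norm_minus_commute)
    moreover have "cmod x \<le> cmod u + cmod (x - u)"
      by (metis norm_triangle_sub add.commute)
    moreover have "cmod u \<le> cmod \<theta>"
      using segment_bound1[OF that] by simp
    ultimately show "x \<in> ball 0 R"
      using r by simp
  qed
  have deriv_bound: "norm (deriv g u) \<le> B / r" if "u \<in> closed_segment 0 \<theta>" for u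
  proof -
    have "norm ((deriv ^^ 1) g u) \<le> fact 1 * B / r ^ 1"
    proof (rule Cauchy_inequality[OF _ _ r(1)])
      show "g holomorphic_on ball u r"
        using hol cball_sub[OF that] ball_subset_cball by (meson holomorphic_on_subset subset_trans)
      show "continuous_on (cball u r) g"
        using holomorphic_on_imp_continuous_on[OF hol] cball_sub[OF that] by (rule continuous_on_subset)
      show "norm (g x) \<le> B" if "norm (u - x) = r" for x
        using that cball_sub[OF \<open>u \<in> closed_segment 0 \<theta>\<close>] bound by (simp add: dist_norm subset_iff)
    qed
    then show ?thesis
      by simp
  qed
  have deriv: "(g has_field_derivative deriv g u) (at u within closed_segment 0 \<theta>)"
    if "u \<in> closed_segment 0 \<theta>" for u
  proof -
    have "u \<in> cball u r"
      using r by simp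
    then have "u \<in> ball 0 R"
      using cball_sub[OF that] by blast
    then have "g field_differentiable at u"
      using hol by (meson holomorphic_on_imp_differentiable_at open_ball)
    then show ?thesis
      by (simp add: DERIV_deriv_iff_field_differentiable[symmetric] has_field_derivative_at_within)
  qed
  have "norm (g \<theta> - g 0) \<le> B / r * norm (\<theta> - 0)"
    by (rule field_differentiable_bound[OF convex_closed_segment deriv deriv_bound]) auto
  then show ?thesis
    by simp
qed

text \<open>Test the Cauchy estimate against \<open>w = F \<theta> - F 0\<close>.\<close>

lemma weakly_holomorphic_lipschitz_estimate:
  fixes F :: "complex \<Rightarrow> 'a::chilbert_space"
  assumes hol: "\<And>w. (\<lambda>z. cinner w (F z)) holomorphic_on ball 0 R"
    and bound: "\<And>z. z \<in> ball 0 R \<Longrightarrow> norm (F z) \<le> B"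
    and r: "r > 0" "cmod \<theta> + r < R"
  shows "norm (F \<theta> - F 0) \<le> B / r * cmod \<theta>"
proof -
  define w where "w = F \<theta> - F 0"
  have "R > 0"
    using r norm_ge_zero[of \<theta>] by linarith
  then have "B \<ge> 0"
    using bound[of 0] by (meson centre_in_ball norm_ge_zero order_trans)
  have "norm (cinner w (F z)) \<le> norm w * B" if "z \<in> ball 0 R" for z
    by (rule order_trans[OF cinner_cauchy_schwarz mult_left_mono[OF bound[OF that] norm_ge_zero]])
  then have "norm (cinner w (F \<theta>) - cinner w (F 0)) \<le> norm w * B / r * cmod \<theta>"
    by (rule holomorphic_lipschitz_estimate[OF hol _ r])
  moreover have "cinner w (F \<theta>) - cinner w (F 0) = complex_of_real ((norm w)\<^sup>2)"
    unfolding w_def by (simp add: cinner_diff_right[symmetric] cinner_self_norm)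
  ultimately have "(norm w)\<^sup>2 \<le> norm w * (B / r * cmod \<theta>)"
    by (simp add: mult.assoc norm_power del: of_real_power)
  have "norm w \<le> B / r * cmod \<theta>"
  proof (cases "norm w = 0")
    case False
    then have "norm w > 0"
      by simp
    moreover have "norm w * norm w \<le> norm w * (B / r * cmod \<theta>)"
      using \<open>(norm w)\<^sup>2 \<le> _\<close> by (simp add: power2_eq_square)
    ultimately show ?thesis
      by (rule mult_le_cancel_left_pos[THEN iffD1])
  qed (use \<open>B \<ge> 0\<close> r in simp)
  then show ?thesis
    by (simp add: w_def)
qed

text \<open>The identity theorem, applied to \<open>\<langle>d, F z (a + b) - F z a - F z b\<rangle>\<close> where \<open>d\<close> is the
  defect at \<open>\<theta>\<close>.\<close>

lemma weakly_holomorphic_additive: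
  fixes F :: "complex \<Rightarrow> 'a::plus \<Rightarrow> 'b::chilbert_space"
  assumes hol: "\<And>\<psi> w. \<psi> \<in> {a, b, a + b} \<Longrightarrow> (\<lambda>z. cinner w (F z \<psi>)) holomorphic_on ball 0 R"
    and real: "\<And>t. \<bar>t\<bar> < R \<Longrightarrow> F (complex_of_real t) (a + b) = F (complex_of_real t) a + F (complex_of_real t) b"
    and \<theta>: "cmod \<theta> < R"
  shows "F \<theta> (a + b) = F \<theta> a + F \<theta> b"
proof -
  define d where "d = F \<theta> (a + b) - F \<theta> a - F \<theta> b"
  define h where "h = (\<lambda>z. cinner d (F z (a + b)) - cinner d (F z a) - cinner d (F z b))"
  have "R > 0"
    using \<theta> norm_ge_zero[of \<theta>] by linarith
  have "0 islimpt (complex_of_real ` {t. \<bar>t\<bar> < R})"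
    unfolding islimpt_approachable
  proof (intro allI impI)
    fix e :: real
    assume "e > 0"
    define t where "t = min e R / 2"
    have "t > 0" "t < e" "t < R"
      unfolding t_def using \<open>e > 0\<close> \<open>R > 0\<close> by auto
    then show "\<exists>x'\<in>complex_of_real ` {t. \<bar>t\<bar> < R}. x' \<noteq> 0 \<and> dist x' 0 < e"
      by (intro bexI[of _ "complex_of_real t"]) (auto simp: dist_norm)
  qed
  note limit_point = this
  have "h holomorphic_on ball 0 R"
    unfolding h_def using hol by (intro holomorphic_intros) auto
  then have "h \<theta> = 0"
  proof (rule analytic_continuation[OF _ open_ball connected_ball _ _ limit_point])
    show "complex_of_real ` {t. \<bar>t\<bar> < R} \<subseteq> ball 0 R" "0 \<in> ball 0 R" "\<theta> \<in> ball 0 R"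
      using \<theta> \<open>R > 0\<close> by auto
    show "\<And>z. z \<in> complex_of_real ` {t. \<bar>t\<bar> < R} \<Longrightarrow> h z = 0"
      using real by (auto simp: h_def cinner_add_right)
  qed
  then have "cinner d d = 0"
    unfolding h_def d_def by (simp add: cinner_diff_right)
  then show ?thesis
    unfolding d_def by (simp add: cinner_self_eq_0 algebra_simps)
qed

lemma norm_le_Sup_onorm:
  fixes G :: "'i \<Rightarrow> 'a::real_normed_vector \<Rightarrow> 'b::real_normed_vector"
  assumes K: "\<And>\<theta> \<phi>. \<theta> \<in> S \<Longrightarrow> norm (G \<theta> \<phi>) \<le> K * norm \<phi>" and "\<theta> \<in> S"
  shows "norm (G \<theta> \<phi>) \<le> Sup {onorm (G \<theta>) | \<theta>. \<theta> \<in> S} * norm \<phi>"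
proof (cases "\<phi> = 0")
  case True
  then show ?thesis
    using K[OF \<open>\<theta> \<in> S\<close>, of \<phi>] by simp
next
  case False
  have ratio: "norm (G \<theta>' \<phi>') / norm \<phi>' \<le> max K 0" if "\<theta>' \<in> S" for \<theta>' \<phi>'
    using order_trans[OF K[OF that, of \<phi>'] mult_right_mono[OF max.cobounded1 norm_ge_zero]]
    by (cases "\<phi>' = 0") (auto simp: divide_le_eq)
  then have "onorm (G \<theta>') \<le> max K 0" if "\<theta>' \<in> S" for \<theta>'
    unfolding onorm_def using that by (intro cSUP_least) auto
  then have "bdd_above {onorm (G \<theta>) | \<theta>. \<theta> \<in> S}"
    by (intro bdd_aboveI[of _ "max K 0"]) auto
  then have sup: "onorm (G \<theta>) \<le> Sup {onorm (G \<theta>) | \<theta>. \<theta> \<in> S}"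
    using \<open>\<theta> \<in> S\<close> by (intro cSup_upper) auto
  have "norm (G \<theta> \<phi>) / norm \<phi> \<le> onorm (G \<theta>)"
    unfolding onorm_def
    by (intro cSUP_upper bdd_aboveI2[where M="max K 0"] ratio[OF \<open>\<theta> \<in> S\<close>]) simp
  then have "norm (G \<theta> \<phi>) \<le> onorm (G \<theta>) * norm \<phi>"
    using False by (simp add: divide_le_eq)
  then show ?thesis
    using order_trans[OF _ mult_right_mono[OF sup norm_ge_zero]] by blast
qed

section \<open>The analytically dilated operator\<close>

lemma relative_bound_lt_one:
  fixes a x y :: real
  assumes "0 \<le> a" "a < 1 / 3" and far: "4 * a * (\<bar>x\<bar> + 1) < \<bar>y\<bar>"
  shows "8 / 5 * a * (1 + (\<bar>x\<bar> + 1) / \<bar>y\<bar>) < 1"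
proof -
  have "\<bar>y\<bar> > 0"
    using far assms(1) by (smt (verit) mult_nonneg_nonneg)
  then have "8 / 5 * a * (\<bar>x\<bar> + 1) / \<bar>y\<bar> \<le> 2 / 5"
    using far by (simp add: field_simps)
  moreover have "8 / 5 * a * (1 + (\<bar>x\<bar> + 1) / \<bar>y\<bar>) = 8 / 5 * a + 8 / 5 * a * (\<bar>x\<bar> + 1) / \<bar>y\<bar>"
    by (simp add: distrib_left)
  ultimately show ?thesis
    using assms(2) by linarith
qed

locale analytic_dilation = self_adjoint_operator D H
  for D :: "'a::chilbert_space set" and H :: "'a \<Rightarrow> 'a" +
  fixes U :: "real \<Rightarrow> 'a \<Rightarrow> 'a" and Hth :: "complex \<Rightarrow> 'a \<Rightarrow> 'a" and R :: real
  assumes U_zero: "U 0 = id"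
    and U_add: "\<And>t a b. U t (a + b) = U t a + U t b"
    and U_domain: "\<And>t. U t ` D \<subseteq> D"
    and Hth_real: "\<And>\<psi> t. \<psi> \<in> D \<Longrightarrow> Hth (complex_of_real t) \<psi> = U t (H (U (- t) \<psi>))"
    and Hth_differentiable: "\<And>\<psi> \<theta>. \<psi> \<in> D \<Longrightarrow> \<bar>Im \<theta>\<bar> < R \<Longrightarrow>
      \<exists>v. ((\<lambda>z. Hth z \<psi>) has_derivative (\<lambda>h. scaleC h v)) (at \<theta>)"
begin

lemma Hth_zero: "\<psi> \<in> D \<Longrightarrow> Hth 0 \<psi> = H \<psi>"
  using Hth_real[of \<psi> 0] by (simp add: U_zero)

lemma Hth_weakly_holomorphic:
  assumes "\<psi> \<in> D"
  shows "(\<lambda>z. cinner w (Hth z \<psi>)) holomorphic_on ball 0 R"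
proof (rule cinner_holomorphic_on[OF open_ball])
  fix \<theta> :: complex
  assume "\<theta> \<in> ball 0 R"
  then have "\<bar>Im \<theta>\<bar> < R"
    using abs_Im_le_cmod[of \<theta>] by simp
  then show "\<exists>v. ((\<lambda>z. Hth z \<psi>) has_derivative (\<lambda>h. scaleC h v)) (at \<theta>)"
    using Hth_differentiable[OF assms] by blast
qed

lemma Hth_diff:
  assumes "a \<in> D" "b \<in> D" "cmod \<theta> < R"
  shows "Hth \<theta> (a - b) = Hth \<theta> a - Hth \<theta> b"
proof -
  have "a - b \<in> D"
    using assms(1,2) by (rule domain_diff)
  have "Hth \<theta> ((a - b) + b) = Hth \<theta> (a - b) + Hth \<theta> b"
  proof (rule weakly_holomorphic_additive[OF _ _ assms(3)])
    show "(\<lambda>z. cinner w (Hth z \<psi>)) holomorphic_on ball 0 R" if "\<psi> \<in> {a - b, b, a - b + b}" for \<psi> w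
      using that \<open>a - b \<in> D\<close> assms by (auto intro: Hth_weakly_holomorphic)
    have "U (- t) (a - b) \<in> D" "U (- t) b \<in> D" for t
      using U_domain \<open>a - b \<in> D\<close> assms(2) by blast+
    moreover have "U (- t) a = U (- t) (a - b) + U (- t) b" for t
      using U_add[of "- t" "a - b" b] by simp
    ultimately show "Hth (complex_of_real t) (a - b + b)
        = Hth (complex_of_real t) (a - b) + Hth (complex_of_real t) b" for t
      using \<open>a - b \<in> D\<close> assms(1,2) by (simp add: Hth_real H_add U_add)
  qed
  then show ?thesis
    by (simp add: eq_diff_eq)
qed

text \<open>On the whole disc, \<open>Hth z \<psi> = Hth z (H + i)\<^sup>-\<^sup>1 (H + i) \<psi>\<close> is bounded by \<open>K \<parallel>(H + i) \<psi>\<parallel>\<close>.\<close>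

lemma Hth_relative_bound:
  assumes K: "\<And>\<theta> \<phi>. cmod \<theta> < R \<Longrightarrow> norm (Hth \<theta> (cresolvent D H (- \<i>) \<phi>)) \<le> K * norm \<phi>"
    and r: "r > 0" "cmod \<theta> + r < R" and "\<psi> \<in> D"
  shows "norm (Hth \<theta> \<psi> - H \<psi>) \<le> K / r * cmod \<theta> * norm (H \<psi> + scaleC \<i> \<psi>)"
proof -
  have plus_i: "H \<psi> - scaleC (- \<i>) \<psi> = H \<psi> + scaleC \<i> \<psi>"
    by (simp add: scaleC_minus_left)
  have resolvent: "cresolvent D H (- \<i>) (H \<psi> + scaleC \<i> \<psi>) = \<psi>"
    unfolding plus_i[symmetric] using \<open>\<psi> \<in> D\<close> by (intro cresolvent_shift) simp_all
  have "norm (Hth \<theta> \<psi> - Hth 0 \<psi>) \<le> K * norm (H \<psi> + scaleC \<i> \<psi>) / r * cmod \<theta>"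
  proof (rule weakly_holomorphic_lipschitz_estimate[OF Hth_weakly_holomorphic[OF \<open>\<psi> \<in> D\<close>] _ r])
    show "norm (Hth z \<psi>) \<le> K * norm (H \<psi> + scaleC \<i> \<psi>)" if "z \<in> ball 0 R" for z
      using K[of z "H \<psi> + scaleC \<i> \<psi>"] that by (simp add: resolvent)
  qed
  then show ?thesis
    using Hth_zero[OF \<open>\<psi> \<in> D\<close>] by (simp add: field_simps)
qed

lemma Hth_minus_H_bound:
  assumes K: "\<And>\<theta> \<phi>. cmod \<theta> < R \<Longrightarrow> norm (Hth \<theta> (cresolvent D H (- \<i>) \<phi>)) \<le> K * norm \<phi>"
    and "K \<ge> 1" and \<theta>: "cmod \<theta> < R / (3 * K)" and "\<psi> \<in> D"
  shows "norm (Hth \<theta> \<psi> - H \<psi>) \<le> 8 / 5 * (K / R * cmod \<theta>) * norm (H \<psi> + scaleC \<i> \<psi>)"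
proof -
  have "R > 0"
    using \<theta> \<open>K \<ge> 1\<close> norm_ge_zero[of \<theta>] by (smt (verit) divide_nonpos_pos)
  have "cmod \<theta> \<le> K * cmod \<theta>"
    using \<open>K \<ge> 1\<close> mult_right_mono[of 1 K "cmod \<theta>"] by simp
  moreover have "3 * (K * cmod \<theta>) < R"
    using \<theta> \<open>K \<ge> 1\<close> by (simp add: field_simps)
  ultimately have "cmod \<theta> + 5 * R / 8 < R"
    using \<open>R > 0\<close> by linarith
  then show ?thesis
    using Hth_relative_bound[OF K, where r="5 * R / 8" and \<theta>=\<theta> and \<psi>=\<psi>] \<open>\<psi> \<in> D\<close> \<open>R > 0\<close>
    by (simp add: ac_simps)
qed

lemma cspectrum_Hth_subset:
  assumes K: "\<And>\<theta> \<phi>. cmod \<theta> < R \<Longrightarrow> norm (Hth \<theta> (cresolvent D H (- \<i>) \<phi>)) \<le> K * norm \<phi>"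
    and "K \<ge> 1" and \<theta>: "cmod \<theta> < R / (3 * K)"
  shows "cspectrum D (Hth \<theta>) \<subseteq> {z. \<bar>Im z\<bar> \<le> 4 * (K / R) * cmod \<theta> * (\<bar>Re z\<bar> + 1)}"
proof (rule subsetI, rule ccontr)
  fix z
  assume "z \<in> cspectrum D (Hth \<theta>)" and "z \<notin> {z. \<bar>Im z\<bar> \<le> 4 * (K / R) * cmod \<theta> * (\<bar>Re z\<bar> + 1)}"
  have "R > 0"
    using \<theta> \<open>K \<ge> 1\<close> norm_ge_zero[of \<theta>] by (smt (verit) divide_nonpos_pos)
  define a where "a = K / R * cmod \<theta>"
  have a: "0 \<le> a" "a < 1 / 3"
    using \<theta> \<open>K \<ge> 1\<close> \<open>R > 0\<close> by (simp_all add: a_def field_simps)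
  have far: "4 * a * (\<bar>Re z\<bar> + 1) < \<bar>Im z\<bar>"
    using \<open>z \<notin> _\<close> by (simp add: a_def)
  then have "Im z \<noteq> 0"
    using a by (smt (verit) mult_nonneg_nonneg)
  have "R / (3 * K) \<le> R / 1"
    using \<open>K \<ge> 1\<close> \<open>R > 0\<close> by (intro divide_left_mono) auto
  with \<theta> have "cmod \<theta> < R"
    by simp
  have "z \<notin> cspectrum D (\<lambda>\<psi>. H \<psi> + (Hth \<theta> \<psi> - H \<psi>))"
  proof (rule notin_cspectrum_relative_perturbation)
    show "Hth \<theta> (x - y) - H (x - y) = (Hth \<theta> x - H x) - (Hth \<theta> y - H y)" if "x \<in> D" "y \<in> D" for x y
      using Hth_diff[OF that \<open>cmod \<theta> < R\<close>] H_diff[OF that] by simp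
    show "norm (Hth \<theta> \<psi> - H \<psi>) \<le> 8 / 5 * a * norm (H \<psi> + scaleC \<i> \<psi>)" if "\<psi> \<in> D" for \<psi>
      unfolding a_def by (rule Hth_minus_H_bound[OF K \<open>K \<ge> 1\<close> \<theta> that])
    show "8 / 5 * a * (1 + (\<bar>Re z\<bar> + 1) / \<bar>Im z\<bar>) < 1"
      by (rule relative_bound_lt_one[OF a far])
  qed (use a \<open>Im z \<noteq> 0\<close> in simp_all)
  then show False
    using \<open>z \<in> cspectrum D (Hth \<theta>)\<close> by simp
qed

end

theorem mainTheorem5:
  fixes DH DA :: "'h::chilbert_space set"
    and H A :: "'h \<Rightarrow> 'h"
    and U :: "real \<Rightarrow> 'h \<Rightarrow> 'h"
    and Hth :: "complex \<Rightarrow> 'h \<Rightarrow> 'h"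
    and R M C :: real
  assumes separable: "\<exists>S::'h set. countable S \<and> closure S = UNIV"
    and H_sa: "self_adjoint_op DH H"
    and A_sa: "self_adjoint_op DA A"
    and U_def: "unitary_group_of U DA A"
    and G1a: "\<forall>t. U t ` DH \<subseteq> DH"
    and G1b: "\<forall>\<psi>\<in>DH. \<exists>K. \<forall>t. \<bar>t\<bar> \<le> 1 \<longrightarrow> norm (H (U t \<psi>)) \<le> K"
    and G2: "\<forall>\<psi>0\<in>DH \<inter> DA. \<forall>\<phi>0\<in>DH \<inter> DA. \<forall>\<epsilon>>0. \<exists>\<delta>>0. \<forall>\<psi>\<in>DH \<inter> DA. \<forall>\<phi>\<in>DH \<inter> DA.
               (norm (H (\<psi> - \<psi>0)) + norm (\<psi> - \<psi>0)) + (norm (H (\<phi> - \<phi>0)) + norm (\<phi> - \<phi>0)) < \<delta> \<longrightarrow>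
               cmod ((cinner (H \<psi>) (A \<phi>) - cinner (A \<psi>) (H \<phi>))
                     - (cinner (H \<psi>0) (A \<phi>0) - cinner (A \<psi>0) (H \<phi>0))) < \<epsilon>"
    and R_pos: "R > 0"
    and G3_real: "\<forall>\<psi>\<in>DH. \<forall>t::real. Hth (complex_of_real t) \<psi> = U t (H (U (- t) \<psi>))"
    and G3_analytic: "\<forall>\<psi>\<in>DH. \<forall>\<theta>. \<bar>Im \<theta>\<bar> < R \<longrightarrow>
               (\<exists>v. ((\<lambda>z. Hth z \<psi>) has_derivative (\<lambda>h. scaleC h v)) (at \<theta>))"
    and G4: "\<exists>K. \<forall>\<theta>. cmod \<theta> < R \<longrightarrow>
               (\<forall>\<phi>. norm (Hth \<theta> (cresolvent DH H (- \<i>) \<phi>)) \<le> K * norm \<phi>)"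
    and M_def: "M = Sup {onorm (\<lambda>\<phi>. Hth \<theta> (cresolvent DH H (- \<i>) \<phi>)) | \<theta>. cmod \<theta> < R}"
    and C_def: "C = max 1 M / R"
  shows "\<forall>\<theta>. cmod \<theta> < 1 / (3 * C) \<longrightarrow>
           cspectrum DH (Hth \<theta>) \<subseteq> {z. \<bar>Im z\<bar> \<le> 4 * C * cmod \<theta> * (\<bar>Re z\<bar> + 1)}"
proof -
  interpret analytic_dilation DH H U Hth R
  proof
    show "self_adjoint_op DH H"
      by (rule H_sa)
    show "U 0 = id" "U t (a + b) = U t a + U t b" for t a b
      using U_def unfolding unitary_group_of_def clinear_op_def by auto
  qed (use G1a G3_real G3_analytic in auto)
  obtain K where K: "\<And>\<theta> \<phi>. cmod \<theta> < R \<Longrightarrow> norm (Hth \<theta> (cresolvent DH H (- \<i>) \<phi>)) \<le> K * norm \<phi>"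
    using G4 by blast
  have "norm (Hth \<theta> (cresolvent DH H (- \<i>) \<phi>)) \<le> max 1 M * norm \<phi>" if "cmod \<theta> < R" for \<theta> \<phi>
  proof -
    have "norm (Hth \<theta> (cresolvent DH H (- \<i>) \<phi>)) \<le> M * norm \<phi>"
      using norm_le_Sup_onorm[where S="{\<theta>. cmod \<theta> < R}" and G="\<lambda>\<theta> \<phi>. Hth \<theta> (cresolvent DH H (- \<i>) \<phi>)"
          and K=K and \<theta>=\<theta> and \<phi>=\<phi>] K that
      unfolding M_def by simp
    also have "\<dots> \<le> max 1 M * norm \<phi>"
      by (simp add: mult_right_mono)
    finally show ?thesis .
  qed
  moreover have "1 / (3 * C) = R / (3 * max 1 M)" "4 * C = 4 * (max 1 M / R)"
    unfolding C_def by simp_all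
  ultimately show ?thesis
    using cspectrum_Hth_subset[of "max 1 M"] by auto
qed

end
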